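(* Let $N=N_A+N_B$ qubits be partitioned into $A$ ($N_A$ qubits) and $B$ ($N_B$ qubits), let $Q_0\in\{0,\dots,N\}$ and $k\ge1$. If $|\Phi\rangle$ is Haar-random in the charge-$Q_0$ sector $\mathcal{H}_{Q_0}$ of $AB$, and $|\tilde\psi_z\rangle={}_B\langle z|\Phi\rangle$ for computational-basis outcomes $z\in\{0,1\}^{N_B}$, then $$\mathbb{E}_{\Phi}\left[\sum_{z}\frac{(|\tilde\psi_z\rangle\langle\tilde\psi_z|)^{\otimes k}}{\langle\tilde\psi_z|\tilde\psi_z\rangle^{k-1}}\right]=\bigoplus_{Q_A=0}^{N_A}\pi(Q_A|Q_0)\,\rho^{(k)}_{\mathrm{Haar},A,Q_A}.$$ Moreover, for each bath string $z$ of Hamming weight $Q_B$, $\mathbb{E}_\Phi[p(z)]=\binom{N_A}{Q_0-Q_B}/\binom{N}{Q_0}$ where $p(z)=\langle\tilde\psi_z|\tilde\psi_z\rangle$.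
   Context: Charge of a computational basis string is its Hamming weight; the charge-$Q$ sector of $n$ qubits is spanned by strings of weight $Q$ and has dimension $\binom{n}{Q}$. Terms with $\langle\tilde\psi_z|\tilde\psi_z\rangle=0$ are omitted from the sum. $\rho^{(k)}_{\mathrm{Haar},A,Q_A}=\mathbb{E}_\phi(|\phi\rangle\langle\phi|)^{\otimes k}$ with $|\phi\rangle$ Haar-random in the charge-$Q_A$ sector of $A$. $\pi(Q_A|Q_0)=\binom{N_A}{Q_A}\binom{N_B}{Q_0-Q_A}/\binom{N}{Q_0}$, with $\binom{n}{m}=0$ for $m\notin\{0,\dots,n\}$. *)

theory Defs
  imports "HOL-Probability.Probability"
begin

definition bitstrings :: "nat \<Rightarrow> bool list set" where
  "bitstrings n = {xs. length xs = n}"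

text \<open>Charge = Hamming weight.\<close>
definition hw :: "bool list \<Rightarrow> nat" where
  "hw xs = length (filter id xs)"

text \<open>State vectors of n qubits: amplitude functions on bitstrings (extensional), with
  the product Borel sigma algebra.\<close>
definition state_space :: "nat \<Rightarrow> (bool list \<Rightarrow> complex) measure" where
  "state_space n = PiM (bitstrings n) (\<lambda>_. borel)"

definition charge_sphere :: "nat \<Rightarrow> nat \<Rightarrow> (bool list \<Rightarrow> complex) set" where
  "charge_sphere n Q = {\<phi> \<in> space (state_space n).
      (\<forall>x\<in>bitstrings n. hw x \<noteq> Q \<longrightarrow> \<phi> x = 0) \<and>
      (\<Sum>x\<in>bitstrings n. (cmod (\<phi> x))^2) = 1}"

definition charge_unitary :: "nat \<Rightarrow> (bool list \<Rightarrow> bool list \<Rightarrow> complex) \<Rightarrow> bool" where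
  "charge_unitary n U \<longleftrightarrow>
     (\<forall>x\<in>bitstrings n. \<forall>y\<in>bitstrings n. hw x \<noteq> hw y \<longrightarrow> U x y = 0) \<and>
     (\<forall>x\<in>bitstrings n. \<forall>x'\<in>bitstrings n.
        (\<Sum>y\<in>bitstrings n. cnj (U y x) * U y x') = (if x = x' then 1 else 0))"

definition apply_op :: "nat \<Rightarrow> (bool list \<Rightarrow> bool list \<Rightarrow> complex) \<Rightarrow> (bool list \<Rightarrow> complex) \<Rightarrow> (bool list \<Rightarrow> complex)" where
  "apply_op n U \<phi> = (\<lambda>x\<in>bitstrings n. \<Sum>y\<in>bitstrings n. U x y * \<phi> y)"

definition haar_sector :: "nat \<Rightarrow> nat \<Rightarrow> (bool list \<Rightarrow> complex) measure \<Rightarrow> bool" where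
  "haar_sector n Q M \<longleftrightarrow> prob_space M \<and> sets M = sets (state_space n) \<and>
     (AE \<phi> in M. \<phi> \<in> charge_sphere n Q) \<and>
     (\<forall>U. charge_unitary n U \<longrightarrow> distr M M (apply_op n U) = M)"

text \<open>Matrix entry ((xs),(ys)) of (|psi><psi|)^{\<otimes>k}; xs, ys are k-tuples of basis strings.\<close>
definition tensor_proj :: "nat \<Rightarrow> (bool list \<Rightarrow> complex) \<Rightarrow> bool list list \<Rightarrow> bool list list \<Rightarrow> complex" where
  "tensor_proj k \<psi> xs ys = (\<Prod>i<k. \<psi> (xs ! i) * cnj (\<psi> (ys ! i)))"

definition haar_moment :: "nat \<Rightarrow> (bool list \<Rightarrow> complex) measure \<Rightarrow> bool list list \<Rightarrow> bool list list \<Rightarrow> complex" where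
  "haar_moment k M xs ys = (LINT \<phi>|M. tensor_proj k \<phi> xs ys)"

text \<open>Unnormalized post-measurement state on A: psi_z(a) = Phi(a z) (A qubits first).\<close>
definition post_state :: "(bool list \<Rightarrow> complex) \<Rightarrow> bool list \<Rightarrow> (bool list \<Rightarrow> complex)" where
  "post_state \<Phi> z = (\<lambda>a. \<Phi> (a @ z))"

definition outcome_prob :: "nat \<Rightarrow> (bool list \<Rightarrow> complex) \<Rightarrow> bool list \<Rightarrow> real" where
  "outcome_prob NA \<Phi> z = (\<Sum>a\<in>bitstrings NA. (cmod (\<Phi> (a @ z)))^2)"

text \<open>Entry of sum_z (|psi_z><psi_z|)^{\<otimes>k} / <psi_z|psi_z>^(k-1), omitting zero-norm terms.\<close>
definition meas_sum :: "nat \<Rightarrow> nat \<Rightarrow> nat \<Rightarrow> (bool list \<Rightarrow> complex) \<Rightarrow> bool list list \<Rightarrow> bool list list \<Rightarrow> complex" where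
  "meas_sum NA NB k \<Phi> xs ys =
     (\<Sum>z\<in>{z\<in>bitstrings NB. outcome_prob NA \<Phi> z \<noteq> 0}.
        tensor_proj k (post_state \<Phi> z) xs ys / (complex_of_real (outcome_prob NA \<Phi> z)) ^ (k - 1))"

text \<open>pi(Q_A | Q_0), with binomials vanishing outside range.\<close>
definition cond_pi :: "nat \<Rightarrow> nat \<Rightarrow> nat \<Rightarrow> nat \<Rightarrow> real" where
  "cond_pi NA NB Q0 QA =
     (if QA \<le> Q0 then real (NA choose QA) * real (NB choose (Q0 - QA)) / real ((NA + NB) choose Q0)
      else 0)"

end

theory Submission
  imports Defs
begin

text \<open>The \<open>k\<close>-th moments of a random state \<open>\<phi>\<close> are the coefficients of the polynomial
  \<open>u \<mapsto> E |\<langle>u|\<phi>\<rangle>|\<^sup>2\<^sup>k\<close>. Measuring the bath outcome \<open>z\<close> and normalizing gives a state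
  \<open>\<psi>\<^sub>z\<close> of charge \<open>Q\<^sub>0 - |z|\<close> on \<open>A\<close>; weighted by \<open>p(z)\<close>, its overlap moments are invariant
  under every charge-conserving unitary \<open>V\<close> on \<open>A\<close>, because the Haar measure on \<open>AB\<close> is
  invariant under \<open>V \<otimes> 1\<close>. Such unitaries act transitively on the unit sphere of a sector, so
  the polynomial is constant there, and a Hilbert-Schmidt argument then forces the weighted
  moments to be \<open>E[p(z)]\<close> times the Haar moments of that sector. Finally
  \<open>E |\<Phi>(x)|\<^sup>2 = 1 / C(N, Q\<^sub>0)\<close> on the sector gives \<open>E[p(z)]\<close>, and grouping the outcomes \<open>z\<close>
  by their charge produces \<open>\<pi>(Q\<^sub>A|Q\<^sub>0)\<close>.\<close>

section \<open>Bit strings and tuples\<close>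

lemma finite_bitstrings [simp]: "finite (bitstrings n)"
proof -
  have "bitstrings n = {xs. set xs \<subseteq> UNIV \<and> length xs = n}" by (auto simp: bitstrings_def)
  then show ?thesis using finite_lists_length_eq[of "UNIV :: bool set" n] by simp
qed

lemma hw_Nil [simp]: "hw [] = 0"
  and hw_Cons [simp]: "hw (b # xs) = (if b then Suc (hw xs) else hw xs)"
  and hw_append [simp]: "hw (xs @ ys) = hw xs + hw ys"
  by (simp_all add: hw_def)

lemma hw_le: "x \<in> bitstrings n \<Longrightarrow> hw x \<le> n"
  by (auto simp: hw_def bitstrings_def length_filter_le)

lemma bitstrings_Suc:
  "bitstrings (Suc n) = Cons True ` bitstrings n \<union> Cons False ` bitstrings n"
proof (rule set_eqI)
  fix x :: "bool list"
  show "x \<in> bitstrings (Suc n) \<longleftrightarrow> x \<in> Cons True ` bitstrings n \<union> Cons False ` bitstrings n"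
    by (cases x; cases "hd x") (auto simp: bitstrings_def)
qed

lemma card_bitstrings_hw: "card {x \<in> bitstrings n. hw x = q} = n choose q"
proof (induction n arbitrary: q)
  case 0
  have "{x \<in> bitstrings 0. hw x = q} = (if q = 0 then {[]} else {})" by (auto simp: bitstrings_def)
  then show ?case by simp
next
  case (Suc n)
  have split: "{x \<in> bitstrings (Suc n). hw x = q} =
     Cons True ` {x \<in> bitstrings n. Suc (hw x) = q} \<union> Cons False ` {x \<in> bitstrings n. hw x = q}"
    by (auto simp: bitstrings_Suc)
  have card_split: "card {x \<in> bitstrings (Suc n). hw x = q} =
     card {x \<in> bitstrings n. Suc (hw x) = q} + card {x \<in> bitstrings n. hw x = q}"
    unfolding split by (subst card_Un_disjoint) (auto simp: card_image)
  show ?case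
  proof (cases q)
    case 0
    then show ?thesis using card_split Suc.IH[of 0] by simp
  next
    case (Suc q')
    then have "{x \<in> bitstrings n. Suc (hw x) = q} = {x \<in> bitstrings n. hw x = q'}" by auto
    then show ?thesis using card_split Suc.IH[of q'] Suc.IH[of q] \<open>q = Suc q'\<close> by simp
  qed
qed

lemma sum_bitstrings_by_hw:
  "(\<Sum>z\<in>bitstrings n. g (hw z)) = (\<Sum>q\<le>n. of_nat (n choose q) * g q)"
proof -
  have "(\<Sum>z\<in>bitstrings n. g (hw z)) = (\<Sum>q\<le>n. \<Sum>z\<in>{z \<in> bitstrings n. hw z = q}. g (hw z))"
    by (rule sum.group[symmetric]) (auto simp: hw_le)
  also have "\<dots> = (\<Sum>q\<le>n. of_nat (n choose q) * g q)"
    by (simp add: card_bitstrings_hw)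
  finally show ?thesis .
qed

lemma append_in_bitstrings: "a \<in> bitstrings m \<Longrightarrow> z \<in> bitstrings n \<Longrightarrow> a @ z \<in> bitstrings (m + n)"
  by (simp add: bitstrings_def)

lemma bitstrings_add:
  "bitstrings (m + n) = (\<lambda>(a, z). a @ z) ` (bitstrings m \<times> bitstrings n)"
proof (rule set_eqI)
  fix x :: "bool list"
  show "x \<in> bitstrings (m + n) \<longleftrightarrow> x \<in> (\<lambda>(a, z). a @ z) ` (bitstrings m \<times> bitstrings n)"
  proof
    assume "x \<in> bitstrings (m + n)"
    then have "x = (\<lambda>(a, z). a @ z) (take m x, drop m x)"
      and "(take m x, drop m x) \<in> bitstrings m \<times> bitstrings n"
      by (auto simp: bitstrings_def)
    then show "x \<in> (\<lambda>(a, z). a @ z) ` (bitstrings m \<times> bitstrings n)" by blast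
  qed (auto simp: bitstrings_def)
qed

lemma sum_bitstrings_add:
  "(\<Sum>y\<in>bitstrings (m + n). g y) = (\<Sum>a\<in>bitstrings m. \<Sum>z\<in>bitstrings n. g (a @ z))"
proof -
  have "inj_on (\<lambda>(a, z). a @ z) (bitstrings m \<times> bitstrings n)"
    by (auto simp: inj_on_def bitstrings_def)
  then show ?thesis
    unfolding bitstrings_add by (subst sum.reindex) (simp_all add: sum.cartesian_product case_prod_beta)
qed

definition tuples :: "nat \<Rightarrow> 'a set \<Rightarrow> 'a list set" where
  "tuples k B = {xs. length xs = k \<and> set xs \<subseteq> B}"

lemma finite_tuples [simp]: "finite B \<Longrightarrow> finite (tuples k B)"
  unfolding tuples_def using finite_lists_length_eq[of B k] by (simp add: conj_commute)

lemma tuples_Suc: "tuples (Suc k) B = (\<lambda>(x, xs). x # xs) ` (B \<times> tuples k B)"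
  unfolding tuples_def by (auto simp: length_Suc_conv image_iff)

lemma nth_in_tuples: "xs \<in> tuples k B \<Longrightarrow> i < k \<Longrightarrow> xs ! i \<in> B"
  unfolding tuples_def using nth_mem by blast

lemma sum_tuples_prod:
  fixes f :: "'a \<Rightarrow> 'b::comm_semiring_1"
  assumes "finite B"
  shows "(\<Sum>xs\<in>tuples k B. \<Prod>i<k. f (xs ! i)) = (\<Sum>x\<in>B. f x) ^ k"
proof (induction k)
  case 0
  have "tuples 0 B = {[]}" by (auto simp: tuples_def)
  then show ?case by simp
next
  case (Suc k)
  have "inj_on (\<lambda>(x, xs). x # xs) (B \<times> tuples k B)" by (auto simp: inj_on_def)
  then have "(\<Sum>xs\<in>tuples (Suc k) B. \<Prod>i<Suc k. f (xs ! i))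
      = (\<Sum>(x, xs)\<in>B \<times> tuples k B. f x * (\<Prod>i<k. f (xs ! i)))"
    unfolding tuples_Suc by (subst sum.reindex) (simp_all add: case_prod_beta prod.lessThan_Suc_shift del: prod.lessThan_Suc)
  also have "\<dots> = (\<Sum>x\<in>B. f x) * (\<Sum>xs\<in>tuples k B. \<Prod>i<k. f (xs ! i))"
    by (simp add: sum.cartesian_product[symmetric] sum_product)
  finally show ?case using Suc by simp
qed

section \<open>Charge-conserving unitaries\<close>

definition braket :: "nat \<Rightarrow> (bool list \<Rightarrow> complex) \<Rightarrow> (bool list \<Rightarrow> complex) \<Rightarrow> complex" where
  "braket n u v = (\<Sum>x\<in>bitstrings n. cnj (u x) * v x)"

lemma braket_cnj: "braket n v u = cnj (braket n u v)"
  by (simp add: braket_def mult.commute)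

lemma braket_self: "braket n u u = complex_of_real (\<Sum>x\<in>bitstrings n. (cmod (u x))^2)"
  unfolding braket_def of_real_sum
  by (rule sum.cong) (simp, metis complex_norm_square of_real_power mult.commute)

lemma charge_sphere_zero:
  "u \<in> charge_sphere n Q \<Longrightarrow> x \<in> bitstrings n \<Longrightarrow> hw x \<noteq> Q \<Longrightarrow> u x = 0"
  by (auto simp: charge_sphere_def)

lemma charge_sphere_norm:
  "u \<in> charge_sphere n Q \<Longrightarrow> (\<Sum>x\<in>bitstrings n. (cmod (u x))^2) = 1"
  by (auto simp: charge_sphere_def)

lemma braket_charge_sphere: "u \<in> charge_sphere n Q \<Longrightarrow> braket n u u = 1"
  by (simp add: braket_self charge_sphere_norm)

lemma norm_le_1_charge_sphere:
  assumes u: "u \<in> charge_sphere n Q" and x: "x \<in> bitstrings n"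
  shows "cmod (u x) \<le> 1"
proof -
  have "(cmod (u x))^2 \<le> (\<Sum>x\<in>bitstrings n. (cmod (u x))^2)"
    using x by (intro member_le_sum) auto
  then have "(cmod (u x))^2 \<le> 1^2" using charge_sphere_norm[OF u] by simp
  then show ?thesis by (rule power2_le_imp_le) simp
qed

lemma braket_apply_op:
  assumes U: "charge_unitary n U"
  shows "braket n (apply_op n U u) (apply_op n U v) = braket n u v"
proof -
  let ?B = "bitstrings n"
  have orth: "(\<Sum>x\<in>?B. cnj (U x y) * U x y') = (if y = y' then 1 else 0)"
    if "y \<in> ?B" "y' \<in> ?B" for y y'
    using U that by (simp add: charge_unitary_def)
  have "braket n (apply_op n U u) (apply_op n U v)
      = (\<Sum>x\<in>?B. \<Sum>y'\<in>?B. \<Sum>y\<in>?B. (cnj (u y) * v y') * (cnj (U x y) * U x y'))"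
    by (simp add: braket_def apply_op_def sum_product mult_ac)
  also have "\<dots> = (\<Sum>y'\<in>?B. \<Sum>x\<in>?B. \<Sum>y\<in>?B. (cnj (u y) * v y') * (cnj (U x y) * U x y'))"
    by (rule sum.swap)
  also have "\<dots> = (\<Sum>y'\<in>?B. \<Sum>y\<in>?B. (cnj (u y) * v y') * (\<Sum>x\<in>?B. cnj (U x y) * U x y'))"
    by (simp add: sum_distrib_left, intro sum.cong refl sum.swap)
  also have "\<dots> = (\<Sum>y'\<in>?B. \<Sum>y\<in>?B. if y = y' then cnj (u y) * v y' else 0)"
    by (intro sum.cong refl) (simp add: orth)
  also have "\<dots> = braket n u v"
    by (simp add: braket_def)
  finally show ?thesis .
qed

lemma sum_norm_apply_op:
  "charge_unitary n U \<Longrightarrow>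
   (\<Sum>x\<in>bitstrings n. (cmod (apply_op n U u x))^2) = (\<Sum>x\<in>bitstrings n. (cmod (u x))^2)"
  using braket_apply_op[of n U u u] by (simp only: braket_self of_real_eq_iff)

lemma unimodular_phase: "\<exists>z::complex. cnj z * z = 1 \<and> cnj z * s = complex_of_real (cmod s)"
proof (cases "s = 0")
  case False
  have "cnj s * s = complex_of_real (cmod s) * complex_of_real (cmod s)"
    by (metis complex_norm_square mult.commute of_real_mult power2_eq_square)
  moreover have "complex_of_real (cmod s) \<noteq> 0" using False by simp
  ultimately have "cnj (s / cmod s) * (s / cmod s) = 1" "cnj (s / cmod s) * s = complex_of_real (cmod s)"
    by (simp_all add: field_simps)
  then show ?thesis by blast
qed (intro exI[of _ 1], simp)

text \<open>A phase times the reflection \<open>I - c |w\<rangle>\<langle>w|\<close>; the condition on \<open>c\<close> says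
  \<open>c = 0\<close> or \<open>c = 2 / \<langle>w|w\<rangle>\<close>.\<close>
lemma charge_unitary_reflection:
  assumes e: "cnj e * e = 1" and c: "cnj c = c" "c * c * braket n w w = 2 * c"
    and w: "\<And>x. x \<in> bitstrings n \<Longrightarrow> hw x \<noteq> Q \<Longrightarrow> w x = 0"
  shows "charge_unitary n (\<lambda>x y. e * ((if x = y then 1 else 0) - c * w x * cnj (w y)))"
    (is "charge_unitary n ?U")
proof -
  let ?B = "bitstrings n"
  define H where "H x y = (if x = y then 1 else 0) - c * w x * cnj (w y)" for x y
  have orth: "(\<Sum>y\<in>?B. cnj (?U y x) * ?U y x') = (if x = x' then 1 else 0)"
    if x: "x \<in> ?B" and x': "x' \<in> ?B" for x x'
  proof -
    let ?K = "c * c * w x * cnj (w x')"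
    have "(\<Sum>y\<in>?B. cnj (?U y x) * ?U y x') = (cnj e * e) * (\<Sum>y\<in>?B. cnj (H y x) * H y x')"
      by (simp add: H_def sum_distrib_left mult_ac)
    also have "\<dots> = (\<Sum>y\<in>?B. (if y = x then (if y = x' then 1 else 0) - c * w y * cnj (w x') else 0)
            - (if y = x' then c * cnj (w y) * w x else 0) + ?K * (cnj (w y) * w y))"
      unfolding e mult_1_left
    proof (rule sum.cong)
      fix y
      show "cnj (H y x) * H y x' = (if y = x then (if y = x' then 1 else 0) - c * w y * cnj (w x') else 0)
            - (if y = x' then c * cnj (w y) * w x else 0) + ?K * (cnj (w y) * w y)"
        by (cases "y = x"; cases "y = x'") (simp_all add: H_def c algebra_simps)
    qed simp
    also have "\<dots> = (if x = x' then 1 else 0) + (c * c * braket n w w - 2 * c) * (w x * cnj (w x'))"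
      using x x' by (simp add: sum.distrib sum_subtractf sum_distrib_left braket_def algebra_simps)
    finally show ?thesis using c by simp
  qed
  have charge: "?U x y = 0" if "x \<in> ?B" "y \<in> ?B" "hw x \<noteq> hw y" for x y
  proof -
    have "w x = 0 \<or> w y = 0" using that w by metis
    with that show ?thesis by auto
  qed
  show ?thesis using orth charge by (simp add: charge_unitary_def)
qed

text \<open>The witness is \<open>z\<^sup>*\<close> times the reflection through \<open>w = u - z v\<close>, where \<open>z\<close> is the phase
  of \<open>\<langle>v|u\<rangle>\<close>; this makes \<open>\<langle>w|w\<rangle> = 2 \<langle>w|u\<rangle>\<close>, so the reflection sends \<open>u\<close> to \<open>z v\<close>.\<close>
lemma charge_sphere_transitive:
  assumes u: "u \<in> charge_sphere n Q" and v: "v \<in> charge_sphere n Q"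
  shows "\<exists>U. charge_unitary n U \<and> (\<forall>x\<in>bitstrings n. apply_op n U u x = v x)"
proof -
  let ?B = "bitstrings n"
  define s where "s = braket n v u"
  obtain z where zz: "cnj z * z = 1" and zs: "cnj z * s = complex_of_real (cmod s)"
    using unimodular_phase by blast
  define w where "w x = u x - z * v x" for x
  define c where "c = 2 / braket n w w"
  define U where "U x y = cnj z * ((if x = y then 1 else 0) - c * w x * cnj (w y))" for x y
  have uu: "braket n u u = 1" and vv: "braket n v v = 1"
    using u v by (simp_all add: braket_charge_sphere)
  have zs': "z * cnj s = complex_of_real (cmod s)"
    using arg_cong[OF zs, of cnj] by simp
  have wu: "braket n w u = 1 - complex_of_real (cmod s)"
  proof -
    have "braket n w u = braket n u u - cnj z * braket n v u"
      by (simp add: braket_def w_def algebra_simps sum_subtractf sum_distrib_left)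
    then show ?thesis using uu zs by (simp add: s_def)
  qed
  have ww: "braket n w w = 2 - 2 * complex_of_real (cmod s)"
  proof -
    have "braket n w w = braket n u u - z * braket n u v - cnj z * braket n v u + (cnj z * z) * braket n v v"
      by (simp add: braket_def w_def algebra_simps sum_subtractf sum.distrib sum_distrib_left)
    then show ?thesis using uu vv zz zs zs' braket_cnj[of n u v] by (simp add: s_def)
  qed
  have unitary: "charge_unitary n U"
    unfolding U_def
  proof (rule charge_unitary_reflection)
    show "cnj (cnj z) * cnj z = 1" using zz by (simp add: mult.commute)
    show "cnj c = c" by (simp add: c_def ww)
    show "c * c * braket n w w = 2 * c" by (cases "braket n w w = 0") (simp_all add: c_def)
    show "w x = 0" if "x \<in> ?B" "hw x \<noteq> Q" for x
      using that charge_sphere_zero[OF u] charge_sphere_zero[OF v] by (simp add: w_def)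
  qed
  have "apply_op n U u x = v x" if x: "x \<in> ?B" for x
  proof -
    have "apply_op n U u x = cnj z * (u x - c * w x * braket n w u)"
      using x by (simp add: apply_op_def U_def braket_def right_diff_distrib sum_subtractf
          sum_distrib_left mult_ac if_distrib[of "(*) _"] cong: if_cong)
    also have "u x - c * w x * braket n w u = u x - w x"
    proof (cases "braket n w w = 0")
      case True
      then have "(\<Sum>y\<in>?B. (cmod (w y))^2) = 0" by (simp only: braket_self of_real_eq_0_iff)
      then have "w x = 0" using x by (simp add: sum_nonneg_eq_0_iff)
      then show ?thesis by simp
    next
      case False
      moreover have "braket n w w = 2 * braket n w u" using wu ww by simp
      ultimately show ?thesis by (simp add: c_def)
    qed
    finally show ?thesis using zz by (simp add: w_def mult.assoc[symmetric])
  qed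
  then show ?thesis using unitary by blast
qed

lemma tensor_proj_cnj: "cnj (tensor_proj k v xs ys) = tensor_proj k v ys xs"
  by (simp add: tensor_proj_def mult.commute)

lemma norm_tensor_proj_le_1:
  assumes u: "u \<in> charge_sphere n Q" and xs: "xs \<in> tuples k (bitstrings n)" and ys: "ys \<in> tuples k (bitstrings n)"
  shows "cmod (tensor_proj k u xs ys) \<le> 1"
  unfolding tensor_proj_def prod_norm[symmetric]
proof (rule prod_le_1)
  fix i assume "i \<in> {..<k}"
  then have "cmod (u (xs ! i)) \<le> 1" "cmod (u (ys ! i)) \<le> 1"
    using norm_le_1_charge_sphere[OF u] nth_in_tuples[OF xs] nth_in_tuples[OF ys] by auto
  then show "0 \<le> cmod (u (xs ! i) * cnj (u (ys ! i))) \<and> cmod (u (xs ! i) * cnj (u (ys ! i))) \<le> 1"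
    by (simp add: norm_mult mult_le_one)
qed

lemma braket_power_eq_sum_tensor_proj:
  "complex_of_real ((cmod (braket n u v))^(2*k)) =
     (\<Sum>xs\<in>tuples k (bitstrings n). \<Sum>ys\<in>tuples k (bitstrings n). tensor_proj k v xs ys * tensor_proj k u ys xs)"
proof -
  let ?L = "tuples k (bitstrings n)"
  have "(\<Sum>xs\<in>?L. \<Sum>ys\<in>?L. tensor_proj k v xs ys * tensor_proj k u ys xs)
      = (\<Sum>xs\<in>?L. \<Sum>ys\<in>?L. (\<Prod>i<k. cnj (u (xs!i)) * v (xs!i)) * (\<Prod>i<k. u (ys!i) * cnj (v (ys!i))))"
    by (intro sum.cong refl) (simp add: tensor_proj_def prod.distrib[symmetric] mult_ac)
  also have "\<dots> = (\<Sum>xs\<in>?L. \<Prod>i<k. cnj (u (xs!i)) * v (xs!i)) * (\<Sum>ys\<in>?L. \<Prod>i<k. u (ys!i) * cnj (v (ys!i)))"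
    by (rule sum_product[symmetric])
  also have "\<dots> = (braket n u v)^k * (cnj (braket n u v))^k"
  proof -
    have "(\<Sum>xs\<in>?L. \<Prod>i<k. cnj (u (xs!i)) * v (xs!i)) = (braket n u v)^k"
      unfolding braket_def by (rule sum_tuples_prod) simp
    moreover have "(\<Sum>ys\<in>?L. \<Prod>i<k. u (ys!i) * cnj (v (ys!i))) = (\<Sum>x\<in>bitstrings n. u x * cnj (v x))^k"
      by (rule sum_tuples_prod) simp
    ultimately show ?thesis by (simp add: braket_def)
  qed
  also have "\<dots> = complex_of_real ((cmod (braket n u v))^(2*k))"
    by (simp add: power_mult_distrib[symmetric] complex_norm_square[symmetric] power_mult)
  finally show ?thesis by simp
qed

lemma borel_measurable_cnj [measurable (raw)]:
  "f \<in> borel_measurable M \<Longrightarrow> (\<lambda>x. cnj (f x)) \<in> borel_measurable M"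
  by (rule borel_measurable_continuous_on[where f=cnj]) (auto intro: continuous_on_cnj continuous_on_id)

lemma borel_measurable_tensor_proj:
  assumes "\<And>x. x \<in> bitstrings n \<Longrightarrow> (\<lambda>\<omega>. \<phi> \<omega> x) \<in> borel_measurable M"
    and "xs \<in> tuples k (bitstrings n)" and "ys \<in> tuples k (bitstrings n)"
  shows "(\<lambda>\<omega>. tensor_proj k (\<phi> \<omega>) xs ys) \<in> borel_measurable M"
  unfolding tensor_proj_def
proof (rule borel_measurable_prod)
  fix i assume "i \<in> {..<k}"
  then have "(\<lambda>\<omega>. \<phi> \<omega> (xs ! i)) \<in> borel_measurable M" "(\<lambda>\<omega>. \<phi> \<omega> (ys ! i)) \<in> borel_measurable M"
    using assms(1) nth_in_tuples[OF assms(2)] nth_in_tuples[OF assms(3)] by auto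
  then show "(\<lambda>\<omega>. \<phi> \<omega> (xs ! i) * cnj (\<phi> \<omega> (ys ! i))) \<in> borel_measurable M" by measurable
qed

lemma borel_measurable_braket:
  assumes "\<And>x. x \<in> bitstrings n \<Longrightarrow> (\<lambda>\<omega>. \<phi> \<omega> x) \<in> borel_measurable M"
  shows "(\<lambda>\<omega>. braket n u (\<phi> \<omega>)) \<in> borel_measurable M"
  unfolding braket_def using assms by (intro borel_measurable_sum borel_measurable_times) auto

lemma measurable_component_state_space:
  "x \<in> bitstrings n \<Longrightarrow> (\<lambda>\<phi>. \<phi> x) \<in> borel_measurable (state_space n)"
  unfolding state_space_def by (rule measurable_component_singleton)

lemma measurable_apply_op: "apply_op n U \<in> measurable (state_space n) (state_space n)"
  unfolding apply_op_def state_space_def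
  by (intro measurable_restrict borel_measurable_sum borel_measurable_times borel_measurable_const
      measurable_component_singleton) auto

lemma haar_sector_borel_measurable:
  "haar_sector n Q M \<Longrightarrow> f \<in> borel_measurable (state_space n) \<Longrightarrow> f \<in> borel_measurable M"
proof -
  assume M: "haar_sector n Q M" and f: "f \<in> borel_measurable (state_space n)"
  have "sets M = sets (state_space n)" using M by (simp add: haar_sector_def)
  then show ?thesis using f by (subst measurable_cong_sets[OF _ refl])
qed

lemma haar_sector_integral_apply_op:
  fixes f :: "(bool list \<Rightarrow> complex) \<Rightarrow> real"
  assumes M: "haar_sector n Q M" and U: "charge_unitary n U" and f: "f \<in> borel_measurable (state_space n)"
  shows "(\<integral>\<phi>. f (apply_op n U \<phi>) \<partial>M) = (\<integral>\<phi>. f \<phi> \<partial>M)"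
proof -
  have sets: "sets M = sets (state_space n)" using M by (simp add: haar_sector_def)
  have "apply_op n U \<in> measurable M M"
    using measurable_apply_op by (simp add: measurable_cong_sets[OF sets sets])
  then have "(\<integral>\<phi>. f \<phi> \<partial>distr M M (apply_op n U)) = (\<integral>\<phi>. f (apply_op n U \<phi>) \<partial>M)"
    using haar_sector_borel_measurable[OF M f] by (rule integral_distr)
  moreover have "distr M M (apply_op n U) = M" using M U by (simp add: haar_sector_def)
  ultimately show ?thesis by simp
qed

section \<open>Invariant ensembles\<close>

text \<open>Examples are the Haar state with weight 1 and the normalized post-measurement state
  weighted by the outcome probability; the weight vanishes where the latter is undefined.\<close>
definition invariant_ensemble ::
    "nat \<Rightarrow> nat \<Rightarrow> nat \<Rightarrow> 'b measure \<Rightarrow> ('b \<Rightarrow> real) \<Rightarrow> ('b \<Rightarrow> bool list \<Rightarrow> complex) \<Rightarrow> bool" where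
  "invariant_ensemble n Q k M \<rho> \<phi> \<longleftrightarrow> prob_space M \<and> \<rho> \<in> borel_measurable M \<and>
     (\<forall>x\<in>bitstrings n. (\<lambda>\<omega>. \<phi> \<omega> x) \<in> borel_measurable M) \<and>
     (AE \<omega> in M. \<bar>\<rho> \<omega>\<bar> \<le> 1) \<and> (AE \<omega> in M. \<rho> \<omega> \<noteq> 0 \<longrightarrow> \<phi> \<omega> \<in> charge_sphere n Q) \<and>
     (\<forall>V u. charge_unitary n V \<longrightarrow>
        (\<integral>\<omega>. \<rho> \<omega> * (cmod (braket n u (apply_op n V (\<phi> \<omega>))))^(2*k) \<partial>M) =
        (\<integral>\<omega>. \<rho> \<omega> * (cmod (braket n u (\<phi> \<omega>)))^(2*k) \<partial>M))"

definition ensemble_moment ::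
    "nat \<Rightarrow> 'b measure \<Rightarrow> ('b \<Rightarrow> real) \<Rightarrow> ('b \<Rightarrow> bool list \<Rightarrow> complex) \<Rightarrow>
     bool list list \<Rightarrow> bool list list \<Rightarrow> complex" where
  "ensemble_moment k M \<rho> \<phi> xs ys = (\<integral>\<omega>. complex_of_real (\<rho> \<omega>) * tensor_proj k (\<phi> \<omega>) xs ys \<partial>M)"

lemma integrable_ensemble_moment:
  assumes E: "invariant_ensemble n Q k M \<rho> \<phi>"
    and xs: "xs \<in> tuples k (bitstrings n)" and ys: "ys \<in> tuples k (bitstrings n)"
  shows "integrable M (\<lambda>\<omega>. complex_of_real (\<rho> \<omega>) * tensor_proj k (\<phi> \<omega>) xs ys)"
proof -
  interpret prob_space M using E by (simp add: invariant_ensemble_def)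
  show ?thesis
  proof (rule integrable_const_bound[where B=1])
    have "(\<lambda>\<omega>. tensor_proj k (\<phi> \<omega>) xs ys) \<in> borel_measurable M" "\<rho> \<in> borel_measurable M"
      using E xs ys by (auto intro: borel_measurable_tensor_proj simp: invariant_ensemble_def)
    then show "(\<lambda>\<omega>. complex_of_real (\<rho> \<omega>) * tensor_proj k (\<phi> \<omega>) xs ys) \<in> borel_measurable M"
      by measurable
    have "AE \<omega> in M. \<bar>\<rho> \<omega>\<bar> \<le> 1" "AE \<omega> in M. \<rho> \<omega> \<noteq> 0 \<longrightarrow> \<phi> \<omega> \<in> charge_sphere n Q"
      using E by (auto simp: invariant_ensemble_def)
    then show "AE \<omega> in M. norm (complex_of_real (\<rho> \<omega>) * tensor_proj k (\<phi> \<omega>) xs ys) \<le> 1"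
    proof eventually_elim
      case (elim \<omega>)
      then show ?case
        using norm_tensor_proj_le_1[OF _ xs ys, of "\<phi> \<omega>"]
        by (cases "\<rho> \<omega> = 0") (simp_all add: norm_mult mult_le_one)
    qed
  qed
qed

lemma ensemble_moment_cnj: "cnj (ensemble_moment k M \<rho> \<phi> xs ys) = ensemble_moment k M \<rho> \<phi> ys xs"
  unfolding ensemble_moment_def
  by (simp only: Bochner_Integration.integral_cnj[symmetric] complex_cnj_mult complex_cnj_complex_of_real
      tensor_proj_cnj)

lemma integral_sum_sum_mult:
  fixes g :: "'i \<Rightarrow> 'i \<Rightarrow> 'b \<Rightarrow> complex"
  assumes "finite A" "\<And>a b. a \<in> A \<Longrightarrow> b \<in> A \<Longrightarrow> integrable M (g a b)"
  shows "(\<integral>\<omega>. (\<Sum>a\<in>A. \<Sum>b\<in>A. c a b * g a b \<omega>) \<partial>M) = (\<Sum>a\<in>A. \<Sum>b\<in>A. c a b * (\<integral>\<omega>. g a b \<omega> \<partial>M))"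
  using assms by (simp add: Bochner_Integration.integral_sum integrable_sum)

lemma sum_ensemble_moment:
  assumes E: "invariant_ensemble n Q k M \<rho> \<phi>"
    and C: "\<And>u. u \<in> charge_sphere n Q \<Longrightarrow>
      (\<Sum>xs\<in>tuples k (bitstrings n). \<Sum>ys\<in>tuples k (bitstrings n). C xs ys * tensor_proj k u ys xs) = c"
  shows "(\<Sum>xs\<in>tuples k (bitstrings n). \<Sum>ys\<in>tuples k (bitstrings n). C xs ys * ensemble_moment k M \<rho> \<phi> ys xs)
    = c * complex_of_real (\<integral>\<omega>. \<rho> \<omega> \<partial>M)"
proof -
  let ?L = "tuples k (bitstrings n)"
  let ?f = "\<lambda>\<omega>. \<Sum>xs\<in>?L. \<Sum>ys\<in>?L. C xs ys * (complex_of_real (\<rho> \<omega>) * tensor_proj k (\<phi> \<omega>) ys xs)"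
  have "(\<Sum>xs\<in>?L. \<Sum>ys\<in>?L. C xs ys * ensemble_moment k M \<rho> \<phi> ys xs) = (\<integral>\<omega>. ?f \<omega> \<partial>M)"
    unfolding ensemble_moment_def
    by (rule integral_sum_sum_mult[symmetric]) (simp_all add: integrable_ensemble_moment[OF E])
  also have "\<dots> = (\<integral>\<omega>. c * complex_of_real (\<rho> \<omega>) \<partial>M)"
  proof (rule integral_cong_AE)
    show "?f \<in> borel_measurable M"
      by (intro borel_measurable_integrable Bochner_Integration.integrable_sum integrable_mult_right
          integrable_ensemble_moment[OF E])
    have "\<rho> \<in> borel_measurable M" using E by (simp add: invariant_ensemble_def)
    then show "(\<lambda>\<omega>. c * complex_of_real (\<rho> \<omega>)) \<in> borel_measurable M" by measurable
    have "AE \<omega> in M. \<rho> \<omega> \<noteq> 0 \<longrightarrow> \<phi> \<omega> \<in> charge_sphere n Q"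
      using E by (simp add: invariant_ensemble_def)
    then show "AE \<omega> in M. ?f \<omega> = c * complex_of_real (\<rho> \<omega>)"
    proof eventually_elim
      case (elim \<omega>)
      have "?f \<omega> = complex_of_real (\<rho> \<omega>) * (\<Sum>xs\<in>?L. \<Sum>ys\<in>?L. C xs ys * tensor_proj k (\<phi> \<omega>) ys xs)"
        by (simp add: sum_distrib_left mult_ac)
      then show ?case using elim C by (cases "\<rho> \<omega> = 0") (simp_all add: mult.commute)
    qed
  qed
  also have "\<dots> = c * complex_of_real (\<integral>\<omega>. \<rho> \<omega> \<partial>M)"
    by simp
  finally show ?thesis .
qed

lemma sum_ensemble_moment_tensor_proj:
  assumes E: "invariant_ensemble n Q k M \<rho> \<phi>"
  shows "(\<Sum>xs\<in>tuples k (bitstrings n). \<Sum>ys\<in>tuples k (bitstrings n). ensemble_moment k M \<rho> \<phi> xs ys * tensor_proj k u ys xs)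
     = complex_of_real (\<integral>\<omega>. \<rho> \<omega> * (cmod (braket n u (\<phi> \<omega>)))^(2*k) \<partial>M)"
proof -
  let ?L = "tuples k (bitstrings n)"
  have "complex_of_real (\<integral>\<omega>. \<rho> \<omega> * (cmod (braket n u (\<phi> \<omega>)))^(2*k) \<partial>M)
      = (\<integral>\<omega>. (\<Sum>xs\<in>?L. \<Sum>ys\<in>?L. tensor_proj k u ys xs * (complex_of_real (\<rho> \<omega>) * tensor_proj k (\<phi> \<omega>) xs ys)) \<partial>M)"
    unfolding integral_complex_of_real[symmetric] of_real_mult
    by (rule Bochner_Integration.integral_cong[OF refl])
      (subst braket_power_eq_sum_tensor_proj, simp add: sum_distrib_left mult_ac)
  also have "\<dots> = (\<Sum>xs\<in>?L. \<Sum>ys\<in>?L. tensor_proj k u ys xs * ensemble_moment k M \<rho> \<phi> xs ys)"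
    unfolding ensemble_moment_def
    by (rule integral_sum_sum_mult) (simp_all add: integrable_ensemble_moment[OF E])
  finally show ?thesis by (simp add: mult.commute)
qed

lemma invariant_ensemble_braket_power:
  assumes E: "invariant_ensemble n Q k M \<rho> \<phi>"
    and u: "u \<in> charge_sphere n Q" and v: "v \<in> charge_sphere n Q"
  shows "(\<integral>\<omega>. \<rho> \<omega> * (cmod (braket n u (\<phi> \<omega>)))^(2*k) \<partial>M)
       = (\<integral>\<omega>. \<rho> \<omega> * (cmod (braket n v (\<phi> \<omega>)))^(2*k) \<partial>M)"
proof -
  obtain V where V: "charge_unitary n V" "\<forall>x\<in>bitstrings n. apply_op n V v x = u x"
    using charge_sphere_transitive[OF v u] by blast
  have "braket n u (apply_op n V \<psi>) = braket n (apply_op n V v) (apply_op n V \<psi>)" for \<psi>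
    unfolding braket_def using V(2) by (intro sum.cong) simp_all
  then have overlap: "braket n u (apply_op n V \<psi>) = braket n v \<psi>" for \<psi>
    by (simp add: braket_apply_op[OF V(1)])
  have "(\<integral>\<omega>. \<rho> \<omega> * (cmod (braket n u (apply_op n V (\<phi> \<omega>))))^(2*k) \<partial>M)
      = (\<integral>\<omega>. \<rho> \<omega> * (cmod (braket n u (\<phi> \<omega>)))^(2*k) \<partial>M)"
    using E V(1) by (simp add: invariant_ensemble_def)
  then show ?thesis by (simp add: overlap)
qed

lemma invariant_ensemble_haar:
  assumes M: "haar_sector n Q M"
  shows "invariant_ensemble n Q k M (\<lambda>_. 1) (\<lambda>\<phi>. \<phi>)"
proof -
  have components: "\<forall>x\<in>bitstrings n. (\<lambda>\<phi>. \<phi> x) \<in> borel_measurable M"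
    using haar_sector_borel_measurable[OF M measurable_component_state_space] by blast
  have "(\<lambda>\<phi>. 1 * (cmod (braket n u \<phi>))^(2*k)) \<in> borel_measurable (state_space n)" for u
    using borel_measurable_braket[of n "\<lambda>\<phi>. \<phi>", OF measurable_component_state_space] by measurable
  then have invariance: "(\<integral>\<phi>. 1 * (cmod (braket n u (apply_op n V \<phi>)))^(2*k) \<partial>M)
      = (\<integral>\<phi>. 1 * (cmod (braket n u \<phi>))^(2*k) \<partial>M)" if "charge_unitary n V" for V u
    using haar_sector_integral_apply_op[OF M that] by blast
  show ?thesis using M components invariance by (simp add: invariant_ensemble_def haar_sector_def)
qed

lemma sum_sum_mult_cnj_eq_0:
  fixes D :: "'a \<Rightarrow> 'a \<Rightarrow> complex"
  assumes "finite A" "(\<Sum>a\<in>A. \<Sum>b\<in>A. D a b * cnj (D a b)) = 0" "a \<in> A" "b \<in> A"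
  shows "D a b = 0"
proof -
  have "complex_of_real (\<Sum>(a, b)\<in>A \<times> A. (cmod (D a b))^2) = 0"
    using assms(2) by (simp only: sum.cartesian_product[symmetric] of_real_sum complex_norm_square)
  then have "(\<Sum>(a, b)\<in>A \<times> A. (cmod (D a b))^2) = 0" by (simp only: of_real_eq_0_iff)
  then have "\<forall>(a, b)\<in>A \<times> A. (cmod (D a b))^2 = 0"
    using assms(1) by (subst (asm) sum_nonneg_eq_0_iff) auto
  then show ?thesis using assms(3,4) by auto
qed

lemma ensemble_moment_polynomial_const:
  assumes E: "invariant_ensemble n Q k M \<rho> \<phi>"
    and u: "u \<in> charge_sphere n Q" and v: "v \<in> charge_sphere n Q"
  shows "(\<Sum>xs\<in>tuples k (bitstrings n). \<Sum>ys\<in>tuples k (bitstrings n). ensemble_moment k M \<rho> \<phi> xs ys * tensor_proj k u ys xs)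
    = (\<Sum>xs\<in>tuples k (bitstrings n). \<Sum>ys\<in>tuples k (bitstrings n). ensemble_moment k M \<rho> \<phi> xs ys * tensor_proj k v ys xs)"
  unfolding sum_ensemble_moment_tensor_proj[OF E] invariant_ensemble_braket_power[OF E u v] ..

lemma haar_sector_charge_sphere_nonempty:
  assumes M: "haar_sector n Q M"
  shows "charge_sphere n Q \<noteq> {}"
proof
  assume "charge_sphere n Q = {}"
  moreover have "AE \<phi> in M. \<phi> \<in> charge_sphere n Q" using M by (simp add: haar_sector_def)
  ultimately have "AE \<phi> in M. False" by simp
  then show False using M prob_space.AE_False by (auto simp: haar_sector_def)
qed

text \<open>The moments of an invariant ensemble and of the Haar state both pair to a constant against
  every polynomial that is constant on the sphere. Comparing the two pairings of the moment
  arrays with each other shows that \<open>D = T - m T\<^sub>H\<^sub>a\<^sub>a\<^sub>r\<close> pairs to zero with both, hence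
  with its own adjoint, so \<open>D = 0\<close>.\<close>
lemma ensemble_moment_eq_haar_moment:
  assumes E: "invariant_ensemble n Q k M \<rho> \<phi>" and H: "haar_sector n Q \<nu>"
    and xs: "xs \<in> tuples k (bitstrings n)" and ys: "ys \<in> tuples k (bitstrings n)"
  shows "ensemble_moment k M \<rho> \<phi> xs ys = complex_of_real (\<integral>\<omega>. \<rho> \<omega> \<partial>M) * haar_moment k \<nu> xs ys"
proof -
  let ?L = "tuples k (bitstrings n)"
  let ?S = "charge_sphere n Q"
  have EH: "invariant_ensemble n Q k \<nu> (\<lambda>_. 1) (\<lambda>\<phi>. \<phi>)" by (rule invariant_ensemble_haar[OF H])
  define T where "T = ensemble_moment k M \<rho> \<phi>"
  define TH where "TH = ensemble_moment k \<nu> (\<lambda>_. 1) (\<lambda>\<phi>. \<phi>)"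
  define m where "m = complex_of_real (\<integral>\<omega>. \<rho> \<omega> \<partial>M)"
  obtain u0 where u0: "u0 \<in> ?S" using haar_sector_charge_sphere_nonempty[OF H] by blast
  define c where "c = (\<Sum>xs\<in>?L. \<Sum>ys\<in>?L. T xs ys * tensor_proj k u0 ys xs)"
  define cH where "cH = (\<Sum>xs\<in>?L. \<Sum>ys\<in>?L. TH xs ys * tensor_proj k u0 ys xs)"
  have poly: "(\<Sum>xs\<in>?L. \<Sum>ys\<in>?L. T xs ys * tensor_proj k u ys xs) = c" if "u \<in> ?S" for u
    unfolding c_def T_def by (rule ensemble_moment_polynomial_const[OF E that u0])
  have polyH: "(\<Sum>xs\<in>?L. \<Sum>ys\<in>?L. TH xs ys * tensor_proj k u ys xs) = cH" if "u \<in> ?S" for u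
    unfolding cH_def TH_def by (rule ensemble_moment_polynomial_const[OF EH that u0])
  have "(\<Sum>xs\<in>?L. \<Sum>ys\<in>?L. T xs ys * TH ys xs) = c"
    using sum_ensemble_moment[OF EH poly] H by (simp add: TH_def haar_sector_def prob_space.prob_space)
  moreover have "(\<Sum>xs\<in>?L. \<Sum>ys\<in>?L. TH xs ys * T ys xs) = cH * m"
    using sum_ensemble_moment[OF E polyH] by (simp add: T_def m_def)
  moreover have "(\<Sum>xs\<in>?L. \<Sum>ys\<in>?L. T xs ys * TH ys xs) = (\<Sum>xs\<in>?L. \<Sum>ys\<in>?L. TH xs ys * T ys xs)"
    by (subst sum.swap) (simp add: mult.commute)
  ultimately have c: "c = cH * m" by simp
  define D where "D xs ys = T xs ys - m * TH xs ys" for xs ys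
  have polyD: "(\<Sum>xs\<in>?L. \<Sum>ys\<in>?L. D xs ys * tensor_proj k u ys xs) = 0" if "u \<in> ?S" for u
  proof -
    have "(\<Sum>xs\<in>?L. \<Sum>ys\<in>?L. D xs ys * tensor_proj k u ys xs)
        = (\<Sum>xs\<in>?L. \<Sum>ys\<in>?L. T xs ys * tensor_proj k u ys xs)
          - m * (\<Sum>xs\<in>?L. \<Sum>ys\<in>?L. TH xs ys * tensor_proj k u ys xs)"
      by (simp add: D_def left_diff_distrib sum_subtractf sum_distrib_left mult.assoc)
    then show ?thesis using poly[OF that] polyH[OF that] c by (simp add: mult.commute)
  qed
  have adjoint: "cnj (D a b) = D b a" for a b
    by (simp add: D_def m_def T_def TH_def ensemble_moment_cnj)
  have "(\<Sum>xs\<in>?L. \<Sum>ys\<in>?L. D xs ys * cnj (D xs ys))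
      = (\<Sum>xs\<in>?L. \<Sum>ys\<in>?L. D xs ys * T ys xs - m * (D xs ys * TH ys xs))"
    by (intro sum.cong refl) (simp only: adjoint, simp add: D_def algebra_simps)
  also have "\<dots> = (\<Sum>xs\<in>?L. \<Sum>ys\<in>?L. D xs ys * T ys xs) - m * (\<Sum>xs\<in>?L. \<Sum>ys\<in>?L. D xs ys * TH ys xs)"
    by (simp add: sum_subtractf sum_distrib_left)
  also have "\<dots> = 0"
    using sum_ensemble_moment[OF E polyD] sum_ensemble_moment[OF EH polyD] by (simp add: T_def TH_def)
  finally have "D xs ys = 0" by (rule sum_sum_mult_cnj_eq_0[OF finite_tuples[OF finite_bitstrings] _ xs ys])
  then show ?thesis by (simp add: D_def T_def TH_def m_def ensemble_moment_def haar_moment_def)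
qed

section \<open>Measuring the bath\<close>

definition lift_op :: "nat \<Rightarrow> (bool list \<Rightarrow> bool list \<Rightarrow> complex) \<Rightarrow> bool list \<Rightarrow> bool list \<Rightarrow> complex" where
  "lift_op m V x y = V (take m x) (take m y) * (if drop m x = drop m y then 1 else 0)"

lemma apply_lift_op:
  assumes a: "a \<in> bitstrings m" and z: "z \<in> bitstrings n"
  shows "apply_op (m + n) (lift_op m V) \<Phi> (a @ z) = apply_op m V (\<lambda>a'. \<Phi> (a' @ z)) a"
proof -
  have "apply_op (m + n) (lift_op m V) \<Phi> (a @ z)
      = (\<Sum>a'\<in>bitstrings m. \<Sum>z'\<in>bitstrings n. lift_op m V (a @ z) (a' @ z') * \<Phi> (a' @ z'))"
    using append_in_bitstrings[OF a z] by (simp add: apply_op_def sum_bitstrings_add)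
  also have "\<dots> = (\<Sum>a'\<in>bitstrings m. \<Sum>z'\<in>bitstrings n. if z' = z then V a a' * \<Phi> (a' @ z) else 0)"
    using a by (intro sum.cong refl) (auto simp: lift_op_def bitstrings_def)
  also have "\<dots> = apply_op m V (\<lambda>a'. \<Phi> (a' @ z)) a"
    using a z by (simp add: apply_op_def)
  finally show ?thesis .
qed

lemma charge_unitary_lift_op:
  assumes V: "charge_unitary m V"
  shows "charge_unitary (m + n) (lift_op m V)"
proof -
  have split: "take m x \<in> bitstrings m" "drop m x \<in> bitstrings n" "x = take m x @ drop m x"
    if "x \<in> bitstrings (m + n)" for x
    using that by (auto simp: bitstrings_def)
  have charge: "lift_op m V x y = 0"
    if x: "x \<in> bitstrings (m + n)" and y: "y \<in> bitstrings (m + n)" and "hw x \<noteq> hw y" for x y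
  proof (cases "drop m x = drop m y")
    case True
    have "hw x = hw (take m x) + hw (drop m x)" "hw y = hw (take m y) + hw (drop m y)"
      using split(3)[OF x] split(3)[OF y] hw_append by metis+
    then have "hw (take m x) \<noteq> hw (take m y)" using True \<open>hw x \<noteq> hw y\<close> by auto
    then show ?thesis using V split(1)[OF x] split(1)[OF y] by (simp add: lift_op_def charge_unitary_def)
  qed (simp add: lift_op_def)
  have orth: "(\<Sum>y\<in>bitstrings (m + n). cnj (lift_op m V y x) * lift_op m V y x') = (if x = x' then 1 else 0)"
    if x: "x \<in> bitstrings (m + n)" and x': "x' \<in> bitstrings (m + n)" for x x'
  proof -
    have "(\<Sum>y\<in>bitstrings (m + n). cnj (lift_op m V y x) * lift_op m V y x')
       = (\<Sum>a\<in>bitstrings m. \<Sum>z\<in>bitstrings n. if z = drop m x then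
            (if drop m x = drop m x' then cnj (V a (take m x)) * V a (take m x') else 0) else 0)"
      unfolding sum_bitstrings_add by (intro sum.cong refl) (auto simp: lift_op_def bitstrings_def)
    also have "\<dots> = (if drop m x = drop m x' then (if take m x = take m x' then 1 else 0) else 0)"
      using V split(1,2)[OF x] split(1)[OF x'] by (simp add: charge_unitary_def)
    also have "\<dots> = (if x = x' then 1 else 0)"
      using split(3)[OF x] split(3)[OF x'] by (metis append_take_drop_id)
    finally show ?thesis .
  qed
  show ?thesis using charge orth by (simp add: charge_unitary_def)
qed

lemma outcome_prob_nonneg: "0 \<le> outcome_prob NA \<Phi> z"
  by (simp add: outcome_prob_def sum_nonneg)

lemma outcome_prob_le_1:
  assumes \<Phi>: "\<Phi> \<in> charge_sphere (NA + NB) Q0" and z: "z \<in> bitstrings NB"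
  shows "outcome_prob NA \<Phi> z \<le> 1"
proof -
  have "outcome_prob NA \<Phi> z \<le> (\<Sum>a\<in>bitstrings NA. \<Sum>z'\<in>bitstrings NB. (cmod (\<Phi> (a @ z')))^2)"
    unfolding outcome_prob_def using z by (intro sum_mono member_le_sum) auto
  also have "\<dots> = 1" using charge_sphere_norm[OF \<Phi>] by (simp add: sum_bitstrings_add)
  finally show ?thesis .
qed

lemma outcome_prob_eq_0:
  assumes \<Phi>: "\<Phi> \<in> charge_sphere (NA + NB) Q0" and z: "z \<in> bitstrings NB"
    and charge: "\<not> (hw z \<le> Q0 \<and> Q0 - hw z \<le> NA)"
  shows "outcome_prob NA \<Phi> z = 0"
proof -
  have "\<Phi> (a @ z) = 0" if a: "a \<in> bitstrings NA" for a
    using hw_le[OF a] charge charge_sphere_zero[OF \<Phi> append_in_bitstrings[OF a z]] by auto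
  then show ?thesis by (simp add: outcome_prob_def)
qed

lemma outcome_prob_apply_lift_op:
  assumes V: "charge_unitary NA V" and z: "z \<in> bitstrings NB"
  shows "outcome_prob NA (apply_op (NA + NB) (lift_op NA V) \<Phi>) z = outcome_prob NA \<Phi> z"
  unfolding outcome_prob_def using apply_lift_op[OF _ z] sum_norm_apply_op[OF V] by simp

lemma borel_measurable_outcome_prob:
  assumes z: "z \<in> bitstrings NB"
  shows "(\<lambda>\<Phi>. outcome_prob NA \<Phi> z) \<in> borel_measurable (state_space (NA + NB))"
  unfolding outcome_prob_def
  using measurable_component_state_space[OF append_in_bitstrings[OF _ z]] by measurable

definition normalized_post_state :: "nat \<Rightarrow> bool list \<Rightarrow> (bool list \<Rightarrow> complex) \<Rightarrow> bool list \<Rightarrow> complex" where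
  "normalized_post_state NA z \<Phi> =
     restrict (\<lambda>a. post_state \<Phi> z a / complex_of_real (sqrt (outcome_prob NA \<Phi> z))) (bitstrings NA)"

lemma borel_measurable_normalized_post_state:
  assumes z: "z \<in> bitstrings NB" and x: "x \<in> bitstrings NA"
  shows "(\<lambda>\<Phi>. normalized_post_state NA z \<Phi> x) \<in> borel_measurable (state_space (NA + NB))"
  using x measurable_component_state_space[OF append_in_bitstrings[OF x z]] borel_measurable_outcome_prob[OF z]
  by (simp add: normalized_post_state_def post_state_def)

lemma normalized_post_state_in_charge_sphere:
  assumes \<Phi>: "\<Phi> \<in> charge_sphere (NA + NB) Q0" and z: "z \<in> bitstrings NB"
    and p: "outcome_prob NA \<Phi> z \<noteq> 0"
  shows "normalized_post_state NA z \<Phi> \<in> charge_sphere NA (Q0 - hw z)"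
proof -
  let ?p = "outcome_prob NA \<Phi> z"
  have "hw z \<le> Q0" using outcome_prob_eq_0[OF \<Phi> z] p by blast
  then have charge: "normalized_post_state NA z \<Phi> x = 0"
    if "x \<in> bitstrings NA" "hw x \<noteq> Q0 - hw z" for x
    using that charge_sphere_zero[OF \<Phi> append_in_bitstrings[OF _ z]]
    by (simp add: normalized_post_state_def post_state_def)
  have "0 < ?p" using p outcome_prob_nonneg[of NA \<Phi> z] by linarith
  have "(\<Sum>x\<in>bitstrings NA. (cmod (normalized_post_state NA z \<Phi> x))^2)
      = (\<Sum>x\<in>bitstrings NA. (cmod (\<Phi> (x @ z)))^2 / ?p)"
    using \<open>0 < ?p\<close> by (intro sum.cong refl)
      (simp add: normalized_post_state_def post_state_def norm_divide power_divide)
  also have "\<dots> = 1"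
    using \<open>0 < ?p\<close> by (simp only: outcome_prob_def sum_divide_distrib[symmetric]) simp
  finally show ?thesis using charge
    by (simp add: charge_sphere_def normalized_post_state_def state_space_def space_PiM)
qed

lemma normalized_post_state_apply_lift_op:
  assumes V: "charge_unitary NA V" and z: "z \<in> bitstrings NB" and a: "a \<in> bitstrings NA"
  shows "normalized_post_state NA z (apply_op (NA + NB) (lift_op NA V) \<Phi>) a
       = apply_op NA V (normalized_post_state NA z \<Phi>) a"
proof -
  let ?s = "complex_of_real (sqrt (outcome_prob NA \<Phi> z))"
  have "normalized_post_state NA z (apply_op (NA + NB) (lift_op NA V) \<Phi>) a
      = apply_op NA V (\<lambda>a'. \<Phi> (a' @ z)) a / ?s"
    using a by (simp add: normalized_post_state_def post_state_def outcome_prob_apply_lift_op[OF V z]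
        apply_lift_op[OF a z])
  also have "\<dots> = (\<Sum>a'\<in>bitstrings NA. V a a' * (\<Phi> (a' @ z) / ?s))"
    using a by (simp add: apply_op_def sum_divide_distrib)
  also have "\<dots> = apply_op NA V (normalized_post_state NA z \<Phi>) a"
    using a by (simp add: apply_op_def normalized_post_state_def post_state_def)
  finally show ?thesis .
qed

text \<open>Invariance comes from that of the Haar measure on \<open>AB\<close> under \<open>V \<otimes> 1\<close>, which leaves the
  outcome probabilities unchanged and rotates the post-measurement state by \<open>V\<close>.\<close>
lemma invariant_ensemble_post_state:
  assumes M: "haar_sector (NA + NB) Q0 M" and z: "z \<in> bitstrings NB"
  shows "invariant_ensemble NA (Q0 - hw z) k M (\<lambda>\<Phi>. outcome_prob NA \<Phi> z) (normalized_post_state NA z)"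
proof -
  have AE: "AE \<Phi> in M. \<Phi> \<in> charge_sphere (NA + NB) Q0" using M by (simp add: haar_sector_def)
  have bounded: "AE \<Phi> in M. \<bar>outcome_prob NA \<Phi> z\<bar> \<le> 1"
    using AE by eventually_elim (use outcome_prob_le_1 outcome_prob_nonneg z in auto)
  have sphere: "AE \<Phi> in M. outcome_prob NA \<Phi> z \<noteq> 0 \<longrightarrow>
      normalized_post_state NA z \<Phi> \<in> charge_sphere NA (Q0 - hw z)"
    using AE by eventually_elim (use normalized_post_state_in_charge_sphere z in auto)
  have invariance: "(\<integral>\<Phi>. f (apply_op (NA + NB) (lift_op NA V) \<Phi>) \<partial>M) = (\<integral>\<Phi>. f \<Phi> \<partial>M)"
    if V: "charge_unitary NA V"
      and "f = (\<lambda>\<Phi>. outcome_prob NA \<Phi> z * (cmod (braket NA u (normalized_post_state NA z \<Phi>)))^(2*k))"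
    for V u f
  proof (rule haar_sector_integral_apply_op[OF M charge_unitary_lift_op[OF V]])
    have "(\<lambda>\<Phi>. braket NA u (normalized_post_state NA z \<Phi>)) \<in> borel_measurable (state_space (NA + NB))"
      by (rule borel_measurable_braket) (rule borel_measurable_normalized_post_state[OF z])
    then show "f \<in> borel_measurable (state_space (NA + NB))"
      unfolding \<open>f = _\<close> using borel_measurable_outcome_prob[OF z] by measurable
  qed
  have "braket NA u (normalized_post_state NA z (apply_op (NA + NB) (lift_op NA V) \<Phi>))
      = braket NA u (apply_op NA V (normalized_post_state NA z \<Phi>))" if "charge_unitary NA V" for u V \<Phi>
    unfolding braket_def by (intro sum.cong refl) (simp add: normalized_post_state_apply_lift_op[OF that z])
  then show ?thesis
    using M bounded sphere invariance[OF _ refl] outcome_prob_apply_lift_op[OF _ z]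
      haar_sector_borel_measurable[OF M borel_measurable_outcome_prob[OF z]]
      haar_sector_borel_measurable[OF M borel_measurable_normalized_post_state[OF z]]
    by (simp add: invariant_ensemble_def haar_sector_def)
qed

section \<open>Haar second moments\<close>

definition basis_vec :: "nat \<Rightarrow> bool list \<Rightarrow> bool list \<Rightarrow> complex" where
  "basis_vec n x = restrict (\<lambda>w. if w = x then 1 else 0) (bitstrings n)"

lemma basis_vec_in_charge_sphere:
  assumes "x \<in> bitstrings n"
  shows "basis_vec n x \<in> charge_sphere n (hw x)"
proof -
  have "(\<Sum>w\<in>bitstrings n. (cmod (basis_vec n x w))^2) = (\<Sum>w\<in>bitstrings n. if w = x then 1 else 0)"
    by (intro sum.cong refl) (auto simp: basis_vec_def)
  with assms show ?thesis
    by (auto simp: charge_sphere_def basis_vec_def state_space_def space_PiM)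
qed

lemma braket_basis_vec:
  assumes "x \<in> bitstrings n"
  shows "braket n (basis_vec n x) \<Psi> = \<Psi> x"
proof -
  have "braket n (basis_vec n x) \<Psi> = (\<Sum>w\<in>bitstrings n. if w = x then \<Psi> w else 0)"
    unfolding braket_def by (intro sum.cong refl) (auto simp: basis_vec_def)
  with assms show ?thesis by simp
qed

lemma integrable_haar_entry:
  assumes M: "haar_sector n Q M" and x: "x \<in> bitstrings n"
  shows "integrable M (\<lambda>\<Phi>. (cmod (\<Phi> x))^2)"
proof -
  interpret prob_space M using M by (simp add: haar_sector_def)
  have "AE \<Phi> in M. \<Phi> \<in> charge_sphere n Q" using M by (simp add: haar_sector_def)
  then have "AE \<Phi> in M. norm ((cmod (\<Phi> x))^2) \<le> 1"
    by eventually_elim (simp add: power_le_one norm_le_1_charge_sphere[OF _ x])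
  moreover have "(\<lambda>\<Phi>. (cmod (\<Phi> x))^2) \<in> borel_measurable M"
    using haar_sector_borel_measurable[OF M measurable_component_state_space[OF x]] by measurable
  ultimately show ?thesis by (intro integrable_const_bound)
qed

lemma haar_entry_eq_0:
  assumes M: "haar_sector n Q M" and x: "x \<in> bitstrings n" and "hw x \<noteq> Q"
  shows "(\<integral>\<Phi>. (cmod (\<Phi> x))^2 \<partial>M) = 0"
proof -
  have "AE \<Phi> in M. \<Phi> \<in> charge_sphere n Q" using M by (simp add: haar_sector_def)
  then have "AE \<Phi> in M. (cmod (\<Phi> x))^2 = 0"
    by eventually_elim (use charge_sphere_zero x \<open>hw x \<noteq> Q\<close> in auto)
  then show ?thesis by (simp add: integral_eq_zero_AE)
qed

text \<open>The diagonal second moments agree on the sector by overlap invariance (\<open>k = 1\<close>) at basis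
  vectors, and they sum to one.\<close>
lemma haar_entry:
  assumes M: "haar_sector n Q M" and x: "x \<in> bitstrings n" and hx: "hw x = Q"
  shows "(\<integral>\<Phi>. (cmod (\<Phi> x))^2 \<partial>M) = 1 / real (n choose Q)"
proof -
  interpret prob_space M using M by (simp add: haar_sector_def)
  let ?e = "\<lambda>y. \<integral>\<Phi>. (cmod (\<Phi> y))^2 \<partial>M"
  have equal: "?e y = ?e x" if "y \<in> bitstrings n" "hw y = Q" for y
    using invariant_ensemble_braket_power[OF invariant_ensemble_haar[OF M, of 1],
        OF basis_vec_in_charge_sphere[OF that(1), unfolded that(2)]
        basis_vec_in_charge_sphere[OF x, unfolded hx]]
    by (simp add: braket_basis_vec that x hx)
  have "AE \<Phi> in M. \<Phi> \<in> charge_sphere n Q" using M by (simp add: haar_sector_def)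
  then have "AE \<Phi> in M. (\<Sum>y\<in>bitstrings n. (cmod (\<Phi> y))^2) = 1"
    by eventually_elim (rule charge_sphere_norm)
  then have "(\<integral>\<Phi>. (\<Sum>y\<in>bitstrings n. (cmod (\<Phi> y))^2) \<partial>M) = (\<integral>\<Phi>. 1 \<partial>M)"
    using integrable_haar_entry[OF M] by (intro integral_cong_AE) auto
  then have "(\<Sum>y\<in>bitstrings n. ?e y) = 1"
    using integrable_haar_entry[OF M] by (simp add: Bochner_Integration.integral_sum prob_space)
  also have "(\<Sum>y\<in>bitstrings n. ?e y) = (\<Sum>y\<in>{y \<in> bitstrings n. hw y = Q}. ?e y)"
    by (rule sum.mono_neutral_right) (auto simp: haar_entry_eq_0[OF M])
  also have "\<dots> = real (n choose Q) * ?e x"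
    using equal by (simp add: card_bitstrings_hw)
  finally have "real (n choose Q) * ?e x = 1" .
  then show ?thesis by (cases "real (n choose Q) = 0") (simp_all add: field_simps)
qed

lemma haar_outcome_prob:
  assumes M: "haar_sector (NA + NB) Q0 M" and z: "z \<in> bitstrings NB"
  shows "(\<integral>\<Phi>. outcome_prob NA \<Phi> z \<partial>M)
     = (if hw z \<le> Q0 then real (NA choose (Q0 - hw z)) / real ((NA + NB) choose Q0) else 0)"
proof -
  let ?C = "real ((NA + NB) choose Q0)"
  have "(\<integral>\<Phi>. outcome_prob NA \<Phi> z \<partial>M) = (\<Sum>a\<in>bitstrings NA. \<integral>\<Phi>. (cmod (\<Phi> (a @ z)))^2 \<partial>M)"
    unfolding outcome_prob_def
    by (rule Bochner_Integration.integral_sum) (rule integrable_haar_entry[OF M append_in_bitstrings[OF _ z]])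
  also have "\<dots> = (\<Sum>a\<in>bitstrings NA. if hw a = Q0 - hw z \<and> hw z \<le> Q0 then 1 / ?C else 0)"
    using append_in_bitstrings[OF _ z]
    by (intro sum.cong refl) (auto simp: haar_entry[OF M] haar_entry_eq_0[OF M])
  also have "\<dots> = (if hw z \<le> Q0 then real (NA choose (Q0 - hw z)) / ?C else 0)"
    by (simp add: sum.If_cases Int_def card_bitstrings_hw)
  finally show ?thesis .
qed

lemma tensor_proj_normalized_post_state:
  assumes xs: "xs \<in> tuples k (bitstrings NA)" and ys: "ys \<in> tuples k (bitstrings NA)"
  shows "tensor_proj k (normalized_post_state NA z \<Phi>) xs ys
       = tensor_proj k (post_state \<Phi> z) xs ys / (complex_of_real (outcome_prob NA \<Phi> z))^k"
proof -
  let ?p = "outcome_prob NA \<Phi> z"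
  have sqrt: "complex_of_real (sqrt ?p) * complex_of_real (sqrt ?p) = complex_of_real ?p"
    using outcome_prob_nonneg[of NA \<Phi> z] by (simp flip: of_real_mult)
  have "tensor_proj k (normalized_post_state NA z \<Phi>) xs ys
      = (\<Prod>i<k. post_state \<Phi> z (xs ! i) * cnj (post_state \<Phi> z (ys ! i)) / complex_of_real ?p)"
    unfolding tensor_proj_def
    using nth_in_tuples[OF xs] nth_in_tuples[OF ys]
    by (intro prod.cong refl) (simp add: normalized_post_state_def sqrt[symmetric])
  then show ?thesis by (simp add: prod_dividef tensor_proj_def)
qed

text \<open>Rewriting \<open>|\<psi>\<^sub>z\<rangle>\<langle>\<psi>\<^sub>z|\<^sup>\<otimes>\<^sup>k / p(z)\<^sup>k\<^sup>-\<^sup>1\<close> as \<open>p(z)\<close> times the \<open>k\<close>-th moment of the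
  normalized state needs \<open>k \<ge> 1\<close>; terms with \<open>p(z) = 0\<close> vanish on the right anyway.\<close>
lemma meas_sum_eq_sum_outcome_prob:
  assumes k: "k \<ge> 1" and xs: "xs \<in> tuples k (bitstrings NA)" and ys: "ys \<in> tuples k (bitstrings NA)"
  shows "meas_sum NA NB k \<Phi> xs ys
     = (\<Sum>z\<in>bitstrings NB. complex_of_real (outcome_prob NA \<Phi> z) * tensor_proj k (normalized_post_state NA z \<Phi>) xs ys)"
  unfolding meas_sum_def
proof (rule sum.mono_neutral_cong_left)
  fix z
  assume "z \<in> {z \<in> bitstrings NB. outcome_prob NA \<Phi> z \<noteq> 0}"
  moreover have "(complex_of_real (outcome_prob NA \<Phi> z)) ^ k
      = complex_of_real (outcome_prob NA \<Phi> z) * (complex_of_real (outcome_prob NA \<Phi> z)) ^ (k - 1)"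
    using k by (simp flip: power_Suc)
  ultimately show "tensor_proj k (post_state \<Phi> z) xs ys / complex_of_real (outcome_prob NA \<Phi> z) ^ (k - 1)
      = complex_of_real (outcome_prob NA \<Phi> z) * tensor_proj k (normalized_post_state NA z \<Phi>) xs ys"
    by (simp add: tensor_proj_normalized_post_state[OF xs ys])
qed auto

lemma integral_post_state_moment:
  assumes M: "haar_sector (NA + NB) Q0 M" and MA: "\<forall>QA\<le>NA. haar_sector NA QA (MA QA)"
    and z: "z \<in> bitstrings NB"
    and xs: "xs \<in> tuples k (bitstrings NA)" and ys: "ys \<in> tuples k (bitstrings NA)"
  shows "(\<integral>\<Phi>. complex_of_real (outcome_prob NA \<Phi> z) * tensor_proj k (normalized_post_state NA z \<Phi>) xs ys \<partial>M)
        = complex_of_real (\<integral>\<Phi>. outcome_prob NA \<Phi> z \<partial>M) * haar_moment k (MA (Q0 - hw z)) xs ys"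
proof (cases "hw z \<le> Q0 \<and> Q0 - hw z \<le> NA")
  case True
  then show ?thesis
    using ensemble_moment_eq_haar_moment[OF invariant_ensemble_post_state[OF M z] _ xs ys] MA
    by (simp add: ensemble_moment_def)
next
  case False
  have "AE \<Phi> in M. \<Phi> \<in> charge_sphere (NA + NB) Q0" using M by (simp add: haar_sector_def)
  then have "AE \<Phi> in M. outcome_prob NA \<Phi> z = 0"
    by eventually_elim (rule outcome_prob_eq_0[OF _ z False])
  then have "AE \<Phi> in M. complex_of_real (outcome_prob NA \<Phi> z) * tensor_proj k (normalized_post_state NA z \<Phi>) xs ys = 0"
    and "AE \<Phi> in M. outcome_prob NA \<Phi> z = 0"
    by auto
  then show ?thesis by (simp add: integral_eq_zero_AE)
qed

lemma cond_pi_eq_0: "NA < QA \<or> Q0 < QA \<or> NB < Q0 - QA \<Longrightarrow> cond_pi NA NB Q0 QA = 0"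
  by (auto simp: cond_pi_def)

lemma sum_atMost_eq_if_vanishing:
  fixes g :: "nat \<Rightarrow> 'a::comm_monoid_add"
  assumes "\<And>i. m < i \<Longrightarrow> g i = 0" and "\<And>i. n < i \<Longrightarrow> g i = 0"
  shows "(\<Sum>i\<le>m. g i) = (\<Sum>i\<le>n. g i)"
proof -
  have "(\<Sum>i\<le>m + n. g i) = (\<Sum>i\<le>m. g i)" "(\<Sum>i\<le>m + n. g i) = (\<Sum>i\<le>n. g i)"
    by (auto intro!: sum.mono_neutral_right) (meson assms not_le)+
  then show ?thesis by simp
qed

lemma sum_bath_charge_eq_sum_cond_pi:
  fixes H :: "nat \<Rightarrow> complex"
  shows "(\<Sum>q\<le>NB. of_nat (NB choose q) *
            (complex_of_real (if q \<le> Q0 then real (NA choose (Q0 - q)) / real ((NA + NB) choose Q0) else 0)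
             * H (Q0 - q)))
       = (\<Sum>QA\<le>NA. complex_of_real (cond_pi NA NB Q0 QA) * H QA)"
proof -
  define t where "t QA = complex_of_real (cond_pi NA NB Q0 QA) * H QA" for QA
  have "(\<Sum>q\<le>NB. of_nat (NB choose q) *
            (complex_of_real (if q \<le> Q0 then real (NA choose (Q0 - q)) / real ((NA + NB) choose Q0) else 0)
             * H (Q0 - q)))
      = (\<Sum>q\<le>NB. if q \<le> Q0 then t (Q0 - q) else 0)"
    by (intro sum.cong refl) (simp add: t_def cond_pi_def)
  also have "\<dots> = (\<Sum>q\<le>Q0. if q \<le> Q0 then t (Q0 - q) else 0)"
    by (rule sum_atMost_eq_if_vanishing) (simp_all add: t_def cond_pi_eq_0)
  also have "\<dots> = (\<Sum>QA\<le>Q0. t QA)"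
    by (rule sum.reindex_bij_witness[where i="\<lambda>x. Q0 - x" and j="\<lambda>x. Q0 - x"]) auto
  also have "\<dots> = (\<Sum>QA\<le>NA. t QA)"
    by (rule sum_atMost_eq_if_vanishing) (simp_all add: t_def cond_pi_eq_0)
  finally show ?thesis by (simp add: t_def)
qed

theorem mainTheorem2:
  fixes NA NB Q0 k :: nat
    and M :: "(bool list \<Rightarrow> complex) measure"
    and MA :: "nat \<Rightarrow> (bool list \<Rightarrow> complex) measure"
  assumes "Q0 \<le> NA + NB" and "k \<ge> 1"
    and "haar_sector (NA + NB) Q0 M"
    and "\<forall>QA\<le>NA. haar_sector NA QA (MA QA)"
  shows "(\<forall>xs ys. length xs = k \<and> length ys = k \<and> set xs \<subseteq> bitstrings NA \<and> set ys \<subseteq> bitstrings NA \<longrightarrow>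
            (LINT \<Phi>|M. meas_sum NA NB k \<Phi> xs ys)
              = (\<Sum>QA\<le>NA. complex_of_real (cond_pi NA NB Q0 QA) * haar_moment k (MA QA) xs ys))
       \<and> (\<forall>z\<in>bitstrings NB.
            (LINT \<Phi>|M. outcome_prob NA \<Phi> z)
              = (if hw z \<le> Q0 then real (NA choose (Q0 - hw z)) / real ((NA + NB) choose Q0) else 0))"
proof (intro conjI allI impI ballI)
  note M = assms(3) and MA = assms(4)
  fix xs ys :: "bool list list"
  assume "length xs = k \<and> length ys = k \<and> set xs \<subseteq> bitstrings NA \<and> set ys \<subseteq> bitstrings NA"
  then have xs: "xs \<in> tuples k (bitstrings NA)" and ys: "ys \<in> tuples k (bitstrings NA)"
    by (auto simp: tuples_def)
  let ?H = "\<lambda>QA. haar_moment k (MA QA) xs ys"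
  have "(LINT \<Phi>|M. meas_sum NA NB k \<Phi> xs ys)
      = (\<Sum>z\<in>bitstrings NB. CLINT \<Phi>|M. complex_of_real (outcome_prob NA \<Phi> z) *
           tensor_proj k (normalized_post_state NA z \<Phi>) xs ys)"
    using integrable_ensemble_moment[OF invariant_ensemble_post_state[OF M] xs ys]
    by (simp add: meas_sum_eq_sum_outcome_prob[OF assms(2) xs ys] Bochner_Integration.integral_sum)
  also have "\<dots> = (\<Sum>z\<in>bitstrings NB. complex_of_real
      (if hw z \<le> Q0 then real (NA choose (Q0 - hw z)) / real ((NA + NB) choose Q0) else 0) * ?H (Q0 - hw z))"
    by (intro sum.cong refl) (simp add: integral_post_state_moment[OF M MA _ xs ys] haar_outcome_prob[OF M])
  also have "\<dots> = (\<Sum>q\<le>NB. of_nat (NB choose q) * (complex_of_real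
      (if q \<le> Q0 then real (NA choose (Q0 - q)) / real ((NA + NB) choose Q0) else 0) * ?H (Q0 - q)))"
    by (rule sum_bitstrings_by_hw)
  also have "\<dots> = (\<Sum>QA\<le>NA. complex_of_real (cond_pi NA NB Q0 QA) * ?H QA)"
    by (rule sum_bath_charge_eq_sum_cond_pi)
  finally show "(LINT \<Phi>|M. meas_sum NA NB k \<Phi> xs ys) = (\<Sum>QA\<le>NA. complex_of_real (cond_pi NA NB Q0 QA) * ?H QA)" .
next
  fix z assume "z \<in> bitstrings NB"
  then show "(LINT \<Phi>|M. outcome_prob NA \<Phi> z)
      = (if hw z \<le> Q0 then real (NA choose (Q0 - hw z)) / real ((NA + NB) choose Q0) else 0)"
    by (rule haar_outcome_prob[OF assms(3)])
qed

end
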